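(* Let $0<\epsilon\le\frac12$, $0<c'\le c$, and let $k\ge 2$ be an integer. Let $f$ be a real-valued function on the integers $m\ge k$ such that for every integer $n\ge 0$: (i) if $n\le 4k$, then $f(n+k)\le c'(n+k)$; (ii) if $n>4k$, then there exist integers $n_1,n_2$ with $n_1+n_2=n$ and $\frac12 n\le n_1\le (1-\epsilon)n$ such that $f(n+k)\le f(n_1+k)+f(n_2+k)+c(n+k)$. Then for every integer $n\ge 2k$, $$f(n+k)\le \frac{c}{\epsilon}\, n\ln n - ck .$$
   Context: $\ln$ denotes the natural logarithm. *)

theory Defs
  imports Complex_Main
begin

end

theory Submission
  imports Defs
begin

text \<open>Strong induction on \<open>n\<close> with hypothesis \<open>f (n + k) \<le> (c/\<epsilon>) n ln n - c k\<close>, the linear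
  base bound covering \<open>n \<le> 4k\<close>. For a split \<open>n = n\<^sub>1 + n\<^sub>2\<close> with \<open>n\<^sub>1 \<ge> n/2\<close>, the inequality
  \<open>ln y \<le> y - 1\<close> gives \<open>n\<^sub>1 ln n\<^sub>1 + n\<^sub>2 ln n\<^sub>2 \<le> n ln n - 2 n\<^sub>1 n\<^sub>2 / n \<le> n ln n - \<epsilon> n\<close>, and this
  saving of \<open>c n\<close> pays for the additive cost \<open>c (n + k)\<close>. If \<open>n\<^sub>2 < 2k\<close>, the hypothesis is not
  available for \<open>n\<^sub>2\<close>; instead the saving \<open>(c/\<epsilon>) n\<^sub>2 ln n \<ge> c n ln n \<ge> 2 c n\<close> obtained from
  \<open>ln n\<^sub>1 \<le> ln n\<close> absorbs the linear bound for \<open>f (n\<^sub>2 + k)\<close>.\<close>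

lemma mult_ln_le_mult_ln_minus:
  fixes a b :: real
  assumes "0 < a" "a \<le> b"
  shows "a * ln a \<le> a * ln b - a * (b - a) / b"
proof -
  have "ln a - ln b = ln (a / b)"
    using assms by (simp add: ln_divide_pos)
  also have "\<dots> \<le> a / b - 1"
    using assms by (intro ln_le_minus_one) simp
  also have "\<dots> = - ((b - a) / b)"
    using assms by (simp add: field_simps)
  finally have "ln a \<le> ln b - (b - a) / b" by simp
  from mult_left_mono[OF this] assms(1) show ?thesis
    by (simp add: algebra_simps)
qed

lemma mult_ln_add_mult_ln_le:
  fixes a b :: real
  assumes "0 < a" "0 < b"
  shows "a * ln a + b * ln b \<le> (a + b) * ln (a + b) - 2 * a * b / (a + b)"
proof -
  have "a * ln a \<le> a * ln (a + b) - a * b / (a + b)"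
    using mult_ln_le_mult_ln_minus[of a "a + b"] assms by simp
  moreover have "b * ln b \<le> b * ln (a + b) - a * b / (a + b)"
    using mult_ln_le_mult_ln_minus[of b "a + b"] assms by (simp add: mult.commute)
  moreover have "2 * a * b / (a + b) = a * b / (a + b) + a * b / (a + b)"
    by (simp add: field_simps)
  moreover have "(a + b) * ln (a + b) = a * ln (a + b) + b * ln (a + b)"
    by (simp add: distrib_right)
  ultimately show ?thesis
    by linarith
qed

lemma one_le_ln: "(3::real) \<le> x \<Longrightarrow> 1 \<le> ln x"
  using exp_le ln_ge_iff[of x 1] by simp

lemma two_le_ln:
  assumes "(9::real) \<le> x"
  shows "2 \<le> ln x"
proof -
  have "exp 1 * exp 1 \<le> (3::real) * 3"
    using exp_le by (intro mult_mono) auto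
  with assms show ?thesis
    using ln_ge_iff[of x 2] by (simp add: mult_exp_exp)
qed

context
  fixes \<epsilon> c :: real
  assumes eps_pos: "0 < \<epsilon>" and c_nonneg: "0 \<le> c"
begin

lemma linear_le_n_ln_bound:
  fixes n k :: real
  assumes "\<epsilon> \<le> 1/2" "2 * k \<le> n" "3 \<le> n"
  shows "c * n + c * k \<le> c / \<epsilon> * n * ln n - c * k"
proof -
  have "2 * c \<le> c / \<epsilon>"
    using mult_right_mono[of "2 * \<epsilon>" 1 c] assms(1) eps_pos c_nonneg by (simp add: field_simps)
  from mult_right_mono[OF this, of n] have "2 * c * n \<le> c / \<epsilon> * n"
    using assms(3) by simp
  moreover have "c / \<epsilon> * n \<le> c / \<epsilon> * n * ln n"
    using mult_left_mono[OF one_le_ln[OF assms(3)], of "c / \<epsilon> * n"] assms(3) eps_pos c_nonneg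
    by simp
  moreover have "2 * c * k \<le> c * n"
    using mult_left_mono[OF assms(2) c_nonneg] by (simp add: algebra_simps)
  ultimately show ?thesis by linarith
qed

lemma balanced_split_le_n_ln:
  fixes n n1 n2 :: real
  assumes "n1 + n2 = n" "n / 2 \<le> n1" "\<epsilon> * n \<le> n2" "0 < n2"
  shows "c / \<epsilon> * n1 * ln n1 + c / \<epsilon> * n2 * ln n2 + c * n \<le> c / \<epsilon> * n * ln n"
proof -
  have "n2 \<le> 2 * n1 * n2 / n"
    using assms by (simp add: field_simps mult_right_mono)
  with mult_ln_add_mult_ln_le[of n1 n2] assms
  have "n1 * ln n1 + n2 * ln n2 \<le> n * ln n - \<epsilon> * n"
    by simp
  from mult_left_mono[OF this, of "c / \<epsilon>"] show ?thesis
    using eps_pos c_nonneg by (simp add: field_simps)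
qed

lemma lopsided_split_le_n_ln:
  fixes n n1 n2 k :: real
  assumes "n1 + n2 = n" "0 < n1" "\<epsilon> * n \<le> n2" "n2 + 2 * k \<le> n" "9 \<le> n"
  shows "c / \<epsilon> * n1 * ln n1 + c * n2 + c * n + 2 * c * k \<le> c / \<epsilon> * n * ln n"
proof -
  have "0 < n2"
    using assms(3,5) mult_pos_pos[OF eps_pos, of n] by linarith
  then have "n1 * ln n1 \<le> n1 * ln n"
    using assms by (intro mult_left_mono) auto
  moreover have "n * ln n = n1 * ln n + n2 * ln n"
    using assms(1) by (metis distrib_right)
  ultimately have "n1 * ln n1 + n2 * ln n \<le> n * ln n"
    by linarith
  from mult_left_mono[OF this, of "c / \<epsilon>"]
  have "c / \<epsilon> * n1 * ln n1 + c / \<epsilon> * n2 * ln n \<le> c / \<epsilon> * n * ln n"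
    using eps_pos c_nonneg by (simp add: distrib_left mult.assoc)
  moreover have "c * n * 2 \<le> c * n * ln n"
    using two_le_ln[OF assms(5)] assms(5) c_nonneg by (intro mult_left_mono) auto
  moreover have "c * n * ln n \<le> c / \<epsilon> * n2 * ln n"
    using mult_right_mono[OF assms(3), of "c / \<epsilon> * ln n"] two_le_ln[OF assms(5)] eps_pos c_nonneg
    by (simp add: field_simps)
  moreover have "c * n2 + 2 * c * k \<le> c * n"
    using mult_left_mono[OF assms(4) c_nonneg] by (simp add: algebra_simps)
  ultimately show ?thesis by linarith
qed

lemma split_step_n_ln_bound:
  fixes f :: "int \<Rightarrow> real" and k n n1 n2 :: int
  assumes k_ge: "2 \<le> k" and n_gt: "4 * k < n"
    and split: "n1 + n2 = n" "real_of_int n / 2 \<le> of_int n1" "of_int n1 \<le> (1 - \<epsilon>) * of_int n"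
    and cost: "f (n + k) \<le> f (n1 + k) + f (n2 + k) + c * of_int (n + k)"
    and base: "\<And>m. 0 \<le> m \<Longrightarrow> m \<le> 4 * k \<Longrightarrow> f (m + k) \<le> c * of_int m + c * of_int k"
    and IH: "\<And>m. 2 * k \<le> m \<Longrightarrow> m < n \<Longrightarrow>
      f (m + k) \<le> c / \<epsilon> * of_int m * ln (of_int m) - c * of_int k"
  shows "f (n + k) \<le> c / \<epsilon> * of_int n * ln (of_int n) - c * of_int k"
proof -
  have sum: "real_of_int n1 + of_int n2 = of_int n"
    using split(1) by (simp flip: of_int_add)
  have cost': "f (n + k) \<le> f (n1 + k) + f (n2 + k) + c * of_int n + c * of_int k"
    using cost by (simp add: distrib_left)
  have n2_ge: "\<epsilon> * of_int n \<le> real_of_int n2"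
    using sum split(3) by (simp add: algebra_simps)
  then have "0 < n2" "2 * k \<le> n1"
    using n_gt k_ge sum split(2) mult_pos_pos[OF eps_pos, of "of_int n"] by linarith+
  then have IH1: "f (n1 + k) \<le> c / \<epsilon> * of_int n1 * ln (of_int n1) - c * of_int k"
    using IH[of n1] split(1) by simp
  show ?thesis
  proof (cases "2 * k \<le> n2")
    case True
    then have "f (n2 + k) \<le> c / \<epsilon> * of_int n2 * ln (of_int n2) - c * of_int k"
      using IH[of n2] split(1) \<open>2 * k \<le> n1\<close> k_ge by simp
    then show ?thesis
      using cost' IH1 balanced_split_le_n_ln[OF sum split(2) n2_ge] \<open>0 < n2\<close> by simp
  next
    case False
    then have IH2: "f (n2 + k) \<le> c * of_int n2 + c * of_int k"
      using base[of n2] \<open>0 < n2\<close> k_ge by simp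
    have "0 < real_of_int n1"
      using \<open>2 * k \<le> n1\<close> k_ge by simp
    moreover have "real_of_int n2 + 2 * of_int k \<le> of_int n" "(9::real) \<le> of_int n"
      using False n_gt k_ge sum split(2) by linarith+
    ultimately show ?thesis
      using cost' IH1 IH2 lopsided_split_le_n_ln[OF sum _ n2_ge, of "of_int k"] by linarith
  qed
qed

end

theorem lemma3:
  fixes \<epsilon> c c' :: real and k :: int and f :: "int \<Rightarrow> real"
  assumes eps_pos: "0 < \<epsilon>" and eps_le: "\<epsilon> \<le> 1/2"
    and c'_pos: "0 < c'" and c'_le: "c' \<le> c"
    and k_ge: "k \<ge> 2"
    and base: "\<And>n::int. 0 \<le> n \<Longrightarrow> n \<le> 4 * k \<Longrightarrow> f (n + k) \<le> c' * of_int (n + k)"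
    and step: "\<And>n::int. 0 \<le> n \<Longrightarrow> n > 4 * k \<Longrightarrow>
       \<exists>n1 n2 :: int. n1 + n2 = n \<and> real_of_int n / 2 \<le> real_of_int n1 \<and> of_int n1 \<le> (1 - \<epsilon>) * of_int n \<and>
         f (n + k) \<le> f (n1 + k) + f (n2 + k) + c * of_int (n + k)"
  shows "\<And>n::int. n \<ge> 2 * k \<Longrightarrow> f (n + k) \<le> c / \<epsilon> * of_int n * ln (of_int n) - c * of_int k"
proof -
  have c_nonneg: "0 \<le> c" using c'_pos c'_le by simp
  have base_c: "f (m + k) \<le> c * of_int m + c * of_int k" if "0 \<le> m" "m \<le> 4 * k" for m
  proof -
    have "c' * of_int (m + k) \<le> c * of_int (m + k)"
      using c'_le that k_ge by (intro mult_right_mono) auto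
    with base[OF that] show ?thesis by (simp add: distrib_left)
  qed
  fix n :: int
  assume "n \<ge> 2 * k"
  then show "f (n + k) \<le> c / \<epsilon> * of_int n * ln (of_int n) - c * of_int k"
  proof (induction "nat n" arbitrary: n rule: less_induct)
    case less
    show ?case
    proof (cases "n \<le> 4 * k")
      case True
      then show ?thesis
        using base_c[of n] less.prems k_ge
          linear_le_n_ln_bound[OF eps_pos c_nonneg eps_le, of "of_int k" "of_int n"] by simp
    next
      case False
      then obtain n1 n2 where "n1 + n2 = n" "real_of_int n / 2 \<le> of_int n1"
        "of_int n1 \<le> (1 - \<epsilon>) * of_int n" "f (n + k) \<le> f (n1 + k) + f (n2 + k) + c * of_int (n + k)"
        using step[of n] k_ge by auto
      from split_step_n_ln_bound[OF eps_pos c_nonneg k_ge _ this base_c] less False k_ge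
      show ?thesis by simp
    qed
  qed
qed

end
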